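(* There is an absolute constant $c>0$ such that the following holds. Let $q$ and $p$ be positive integers, let $\delta=p-q/2$ (so $p=q/2+\delta$), let $W\subseteq\{0,1,\dots,q-1\}$, let $Q>0$ with $Q|\delta|<q/3$, and let $b$ be an integer with $|2b|<Q$. Then $$\left|f_W\left(\frac{2b}{q}\right)-f_W\left(\frac{b}{p}\right)\right|\ \le\ c\,\frac{|\delta| Q |W|}{q}.$$
   Context: $e(u)=\exp(2\pi i u)$ and, for a finite set of integers $W$, $f_W(t)=\sum_{s\in W}e(st)$. *)

theory Defs
  imports "HOL-Analysis.Analysis"
begin

definition e :: "real \<Rightarrow> complex" where
  "e u = exp (2 * pi * \<i> * complex_of_real u)"

definition fW :: "int set \<Rightarrow> real \<Rightarrow> complex" where
  "fW W t = (\<Sum>s\<in>W. e (of_int s * t))"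

end

theory Submission
  imports Defs
begin

text \<open>Each character \<open>t \<mapsto> e(s t)\<close> is \<open>2\<pi>|s|\<close>-Lipschitz, so for \<open>W \<subseteq> [0, q)\<close> the sum \<open>f\<^sub>W\<close> is
  \<open>2\<pi> q |W|\<close>-Lipschitz. The two frequencies differ by \<open>|2b/q - b/p| = 2|b||\<delta>|/(qp)\<close>; for \<open>b \<noteq> 0\<close>
  we have \<open>Q > 2\<close>, hence \<open>|\<delta>| < q/6\<close> and \<open>p > q/3\<close>, so this is at most \<open>3|\<delta>|Q/q\<^sup>2\<close>.
  Altogether one may take \<open>c = 6\<pi>\<close>.\<close>

lemma norm_e_diff_le: "cmod (e x - e y) \<le> 2 * pi * \<bar>x - y\<bar>"
proof -
  have factor: "e x - e y = e y * (exp (\<i> * complex_of_real (2 * pi * (x - y))) - 1)"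
    unfolding e_def by (simp add: exp_add[symmetric] algebra_simps)
  have norm_e: "cmod (e y) = 1"
    unfolding e_def
    by (metis norm_exp_i_times of_real_mult of_real_numeral mult.commute mult.left_commute)
  have "cmod (e x - e y) = 2 * \<bar>sin (2 * pi * (x - y) / 2)\<bar>"
    unfolding factor norm_mult norm_e dist_exp_i_1 by simp
  also have "\<dots> \<le> 2 * \<bar>2 * pi * (x - y) / 2\<bar>"
    using abs_sin_x_le_abs_x[of "2 * pi * (x - y) / 2"] by simp
  also have "\<dots> = 2 * pi * \<bar>x - y\<bar>"
    by (simp add: abs_mult)
  finally show ?thesis .
qed

lemma norm_fW_diff_le:
  assumes bounded: "\<And>s. s \<in> W \<Longrightarrow> \<bar>real_of_int s\<bar> \<le> M"
  shows "cmod (fW W t - fW W u) \<le> 2 * pi * M * real (card W) * \<bar>t - u\<bar>"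
proof (cases "finite W")
  case True
  have "cmod (fW W t - fW W u) = cmod (\<Sum>s\<in>W. e (of_int s * t) - e (of_int s * u))"
    by (simp add: fW_def sum_subtractf)
  also have "\<dots> \<le> (\<Sum>s\<in>W. cmod (e (of_int s * t) - e (of_int s * u)))"
    by (rule norm_sum)
  also have "\<dots> \<le> (\<Sum>s\<in>W. 2 * pi * M * \<bar>t - u\<bar>)"
  proof (rule sum_mono)
    fix s assume "s \<in> W"
    have "cmod (e (of_int s * t) - e (of_int s * u)) \<le> 2 * pi * (\<bar>real_of_int s\<bar> * \<bar>t - u\<bar>)"
      using norm_e_diff_le[of "of_int s * t" "of_int s * u"]
      by (simp add: abs_mult right_diff_distrib[symmetric])
    also have "\<dots> \<le> 2 * pi * (M * \<bar>t - u\<bar>)"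
      using bounded[OF \<open>s \<in> W\<close>] by (intro mult_left_mono mult_right_mono) auto
    finally show "cmod (e (of_int s * t) - e (of_int s * u)) \<le> 2 * pi * M * \<bar>t - u\<bar>"
      by (simp add: mult.assoc)
  qed
  also have "\<dots> = 2 * pi * M * real (card W) * \<bar>t - u\<bar>"
    by simp
  finally show ?thesis .
next
  case False
  then show ?thesis by (simp add: fW_def)
qed

lemma abs_frequency_diff_le:
  fixes q p :: nat and Q :: real and b :: int
  assumes q: "q > 0" and p: "p > 0"
    and small_shift: "Q * \<bar>real p - real q / 2\<bar> < real q / 3"
    and b_small: "real_of_int \<bar>2 * b\<bar> < Q"
  shows "\<bar>real_of_int (2 * b) / real q - real_of_int b / real p\<bar>
    \<le> 3 * \<bar>real p - real q / 2\<bar> * Q / (real q)\<^sup>2"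
proof (cases "b = 0")
  case True
  then show ?thesis using b_small by simp
next
  case False
  define \<delta> where "\<delta> = \<bar>real p - real q / 2\<bar>"
  have "Q > 2" using False b_small by (simp add: abs_mult)
  then have "2 * \<delta> < real q / 3"
    using small_shift mult_right_mono[of 2 Q \<delta>] by (simp add: \<delta>_def)
  then have p_large: "real q / 3 < real p"
    by (simp add: \<delta>_def abs_if split: if_splits)
  have diff: "real_of_int (2 * b) / real q - real_of_int b / real p
      = real_of_int b * (2 * (real p - real q / 2)) / (real q * real p)"
    using q p by (simp add: field_simps)
  have twice_\<delta>: "\<bar>2 * (real p - real q / 2)\<bar> = 2 * \<delta>"
    unfolding \<delta>_def abs_mult by simp
  have "\<bar>real_of_int (2 * b) / real q - real_of_int b / real p\<bar>
      = \<bar>real_of_int b\<bar> * (2 * \<delta>) / (real q * real p)"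
    unfolding diff abs_divide abs_mult twice_\<delta> by (simp add: \<delta>_def)
  also have "\<dots> \<le> (Q / 2) * (2 * \<delta>) / (real q * (real q / 3))"
  proof (rule frac_le)
    show "\<bar>real_of_int b\<bar> * (2 * \<delta>) \<le> Q / 2 * (2 * \<delta>)"
      using b_small by (intro mult_right_mono) (auto simp: \<delta>_def abs_mult)
    show "real q * (real q / 3) \<le> real q * real p"
      using p_large by (intro mult_left_mono) auto
  qed (use q b_small in \<open>auto simp: \<delta>_def\<close>)
  also have "\<dots> = 3 * \<delta> * Q / (real q)\<^sup>2"
    using q by (simp add: field_simps power2_eq_square)
  finally show ?thesis unfolding \<delta>_def .
qed

theorem lemma2:
  "\<exists>c::real. c > 0 \<and>
     (\<forall>(q::nat) (p::nat) (W::int set) (Q::real) (b::int).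
        q > 0 \<longrightarrow> p > 0 \<longrightarrow> W \<subseteq> {0..<int q} \<longrightarrow> Q > 0 \<longrightarrow>
        Q * \<bar>real p - real q / 2\<bar> < real q / 3 \<longrightarrow>
        real_of_int \<bar>2 * b\<bar> < Q \<longrightarrow>
        cmod (fW W (real_of_int (2 * b) / real q) - fW W (real_of_int b / real p))
          \<le> c * \<bar>real p - real q / 2\<bar> * Q * real (card W) / real q)"
proof (rule exI[of _ "6 * pi"], intro conjI allI impI)
  show "0 < 6 * pi" by simp
  fix q p :: nat and W :: "int set" and Q :: real and b :: int
  assume q: "q > 0" and p: "p > 0" and W: "W \<subseteq> {0..<int q}" and "Q > 0"
    and small_shift: "Q * \<bar>real p - real q / 2\<bar> < real q / 3"
    and b_small: "real_of_int \<bar>2 * b\<bar> < Q"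
  let ?t = "real_of_int (2 * b) / real q" and ?u = "real_of_int b / real p"
  have "cmod (fW W ?t - fW W ?u) \<le> 2 * pi * real q * real (card W) * \<bar>?t - ?u\<bar>"
    using W by (intro norm_fW_diff_le) auto
  also have "\<dots> \<le> 2 * pi * real q * real (card W)
      * (3 * \<bar>real p - real q / 2\<bar> * Q / (real q)\<^sup>2)"
    using abs_frequency_diff_le[OF q p small_shift b_small] by (intro mult_left_mono) auto
  also have "\<dots> = 6 * pi * \<bar>real p - real q / 2\<bar> * Q * real (card W) / real q"
    using q by (simp add: field_simps power2_eq_square)
  finally show "cmod (fW W ?t - fW W ?u)
      \<le> 6 * pi * \<bar>real p - real q / 2\<bar> * Q * real (card W) / real q" .
qed

end
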